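(* Assume that $r(\omega)\neq r(\omega')$ for all distinct $\omega,\omega'\in\Omega^-$. Then for each $p\in J$ the greedy splitting $p=a_Iq_I+a_Jq_J$ is uniquely defined (as an element of $\mathcal{S}(p)$). In addition, $q_I\in\mathcal{F}$ (whenever $a_I>0$) and $q_J\in\Delta(\Omega^-)$.
   Context: $\Omega$ is a finite set, $r:\Omega\to\mathbb{R}$; each $\omega$ is identified with a unit vector of $\mathbb{R}^\Omega$ and $\Delta(\Omega)$ with the unit simplex. $I=\{p:\sum_\omega p(\omega)r(\omega)\ge0\}$, $J=\Delta(\Omega)\setminus I$, $\mathcal{F}=\{p:\sum_\omega p(\omega)r(\omega)=0\}$, $\Omega^-=\{\omega:r(\omega)<0\}$, and $\Delta(\Omega^-)$ is the face of the simplex spanned by $\Omega^-$. $\mathcal{S}(p)$ is the set of probability measures on $\Delta(\Omega)$ with mean $p$; a decomposition $p=a_Iq_I+a_Jq_J$ is identified with the measure putting weight $a_I$ on $q_I$ and $a_J$ on $q_J$. The greedy splitting at $p\in J$ is a decomposition $p=a_Iq_I+a_Jq_J$ maximizing $a_I$ subject to $q_I\in I$, $q_J\in\Delta(\Omega)$, $a_I+a_J=1$, $a_I,a_J\ge0$. *)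

theory Defs
  imports Main "HOL-Analysis.Analysis"
begin

text \<open>Omega is a finite type 'w; points of R^Omega are functions 'w => real.\<close>

definition prob_simplex :: "('w::finite \<Rightarrow> real) set" where
  "prob_simplex = {p. (\<forall>w. 0 \<le> p w) \<and> (\<Sum>w\<in>UNIV. p w) = 1}"

definition Iset :: "('w::finite \<Rightarrow> real) \<Rightarrow> ('w \<Rightarrow> real) set" where
  "Iset r = {p \<in> prob_simplex. (\<Sum>w\<in>UNIV. p w * r w) \<ge> 0}"

definition Jset :: "('w::finite \<Rightarrow> real) \<Rightarrow> ('w \<Rightarrow> real) set" where
  "Jset r = prob_simplex - Iset r"

definition Fset :: "('w::finite \<Rightarrow> real) \<Rightarrow> ('w \<Rightarrow> real) set" where
  "Fset r = {p. (\<Sum>w\<in>UNIV. p w * r w) = 0}"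

definition Omega_neg :: "('w::finite \<Rightarrow> real) \<Rightarrow> 'w set" where
  "Omega_neg r = {w. r w < 0}"

definition prob_simplex_neg :: "('w::finite \<Rightarrow> real) \<Rightarrow> ('w \<Rightarrow> real) set" where
  "prob_simplex_neg r = {p \<in> prob_simplex. \<forall>w. w \<notin> Omega_neg r \<longrightarrow> p w = 0}"

text \<open>Admissible decompositions p = aI qI + aJ qJ. The constraint qI in I is
  only imposed when aI > 0 (when aI = 0 the component qI carries no mass).\<close>
definition feasible_split ::
  "('w::finite \<Rightarrow> real) \<Rightarrow> ('w \<Rightarrow> real) \<Rightarrow> real \<Rightarrow> ('w \<Rightarrow> real) \<Rightarrow> real \<Rightarrow> ('w \<Rightarrow> real) \<Rightarrow> bool" where
  "feasible_split r p aI qI aJ qJ \<longleftrightarrow>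
     0 \<le> aI \<and> 0 \<le> aJ \<and> aI + aJ = 1 \<and> qI \<in> prob_simplex \<and> qJ \<in> prob_simplex \<and>
     (0 < aI \<longrightarrow> qI \<in> Iset r) \<and> p = (\<lambda>w. aI * qI w + aJ * qJ w)"

definition greedy_split ::
  "('w::finite \<Rightarrow> real) \<Rightarrow> ('w \<Rightarrow> real) \<Rightarrow> real \<Rightarrow> ('w \<Rightarrow> real) \<Rightarrow> real \<Rightarrow> ('w \<Rightarrow> real) \<Rightarrow> bool" where
  "greedy_split r p aI qI aJ qJ \<longleftrightarrow> feasible_split r p aI qI aJ qJ \<and>
     (\<forall>aI' qI' aJ' qJ'. feasible_split r p aI' qI' aJ' qJ' \<longrightarrow> aI' \<le> aI)"

text \<open>The (finitely supported) probability measure on the prob_simplex associated with a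
  decomposition: weight aI at qI and weight aJ at qJ (weights add if qI = qJ).\<close>
definition split_measure ::
  "real \<Rightarrow> ('w \<Rightarrow> real) \<Rightarrow> real \<Rightarrow> ('w \<Rightarrow> real) \<Rightarrow> (('w \<Rightarrow> real) \<Rightarrow> real)" where
  "split_measure aI qI aJ qJ = (\<lambda>q. (if q = qI then aI else 0) + (if q = qJ then aJ else 0))"

end

theory Submission
  imports Defs
begin

text \<open>A split of \<open>p\<close> is determined by its \<open>I\<close>-part \<open>y = a\<^sub>I q\<^sub>I\<close>, a sub-measure of \<open>p\<close>
  with nonnegative \<open>r\<close>-moment, and \<open>a\<^sub>I\<close> is the mass of \<open>y\<close>. Maximising this mass is a
  bathtub problem: the optimum keeps all of \<open>p\<close> on the states above a threshold level
  \<open>r w\<^sub>0 < 0\<close>, nothing below it, and the fraction of the level \<open>r w\<^sub>0\<close> that makes the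
  \<open>r\<close>-moment vanish. Comparing \<open>y (r - r w\<^sub>0)\<close> pointwise with the optimum shows that it has
  maximal mass, and that it is the only maximiser once \<open>w\<^sub>0\<close> is the only state at its level.\<close>

lemma Jset_iff: "p \<in> Jset r \<longleftrightarrow> p \<in> prob_simplex \<and> (\<Sum>w\<in>UNIV. p w * r w) < 0"
  by (auto simp: Jset_def Iset_def)

definition admissible_part :: "('w::finite \<Rightarrow> real) \<Rightarrow> ('w \<Rightarrow> real) \<Rightarrow> ('w \<Rightarrow> real) \<Rightarrow> bool" where
  "admissible_part r p y \<longleftrightarrow> (\<forall>w. 0 \<le> y w \<and> y w \<le> p w) \<and> 0 \<le> (\<Sum>w\<in>UNIV. y w * r w)"

definition threshold_part :: "('w::finite \<Rightarrow> real) \<Rightarrow> ('w \<Rightarrow> real) \<Rightarrow> 'w \<Rightarrow> ('w \<Rightarrow> real) \<Rightarrow> bool" where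
  "threshold_part r p w0 x \<longleftrightarrow> (\<forall>w. 0 \<le> x w \<and> x w \<le> p w) \<and>
     (\<forall>w. r w0 < r w \<longrightarrow> x w = p w) \<and> (\<forall>w. r w < r w0 \<longrightarrow> x w = 0) \<and>
     (\<Sum>w\<in>UNIV. x w * r w) = 0"

lemma threshold_part_admissible_part:
  "threshold_part r p w0 x \<Longrightarrow> admissible_part r p x"
  by (simp add: threshold_part_def admissible_part_def)

lemma feasible_split_admissible_part:
  assumes "feasible_split r p a qI aJ qJ"
  shows "admissible_part r p (\<lambda>w. a * qI w)" and "sum (\<lambda>w. a * qI w) UNIV = a"
proof -
  have a: "0 \<le> a" "qI \<in> prob_simplex" "0 < a \<longrightarrow> qI \<in> Iset r"
    "p = (\<lambda>w. a * qI w + aJ * qJ w)" "qJ \<in> prob_simplex" "0 \<le> aJ"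
    using assms by (auto simp: feasible_split_def)
  have "0 \<le> a * (\<Sum>w\<in>UNIV. qI w * r w)"
    using a by (cases "a = 0") (auto simp: Iset_def)
  then show "admissible_part r p (\<lambda>w. a * qI w)"
    using a by (auto simp: admissible_part_def prob_simplex_def sum_distrib_left mult.assoc)
  show "sum (\<lambda>w. a * qI w) UNIV = a"
    using a by (simp add: sum_distrib_left[symmetric] prob_simplex_def)
qed

lemma feasible_split_of_admissible_part:
  assumes p: "p \<in> prob_simplex" and y: "admissible_part r p y" and y1: "sum y UNIV < 1"
  shows "\<exists>qI. feasible_split r p (sum y UNIV) qI (1 - sum y UNIV)
    (\<lambda>w. (p w - y w) / (1 - sum y UNIV))"
proof -
  define A where "A = sum y UNIV"
  define qI where "qI = (if 0 < A then (\<lambda>w. y w / A) else p)"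
  have y0: "\<And>w. 0 \<le> y w" and yp: "\<And>w. y w \<le> p w" and yr: "0 \<le> (\<Sum>w\<in>UNIV. y w * r w)"
    using y by (auto simp: admissible_part_def)
  have A0: "0 \<le> A" using y0 by (simp add: A_def sum_nonneg)
  have "qI \<in> prob_simplex"
    using p y0 by (auto simp: qI_def A_def prob_simplex_def sum_divide_distrib[symmetric])
  moreover have "0 < A \<longrightarrow> qI \<in> Iset r"
    using \<open>qI \<in> prob_simplex\<close> yr
    by (auto simp: Iset_def qI_def sum_divide_distrib[symmetric])
  moreover have "(\<lambda>w. (p w - y w) / (1 - A)) \<in> prob_simplex"
    using p yp y1 by (auto simp: A_def prob_simplex_def sum_divide_distrib[symmetric] sum_subtractf)
  moreover have "y w = 0" if "A = 0" for w
    using sum_nonneg_eq_0_iff[of UNIV y] y0 that by (auto simp: A_def)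
  then have "p = (\<lambda>w. A * qI w + (1 - A) * ((p w - y w) / (1 - A)))"
    using A0 y1 by (auto simp: A_def[symmetric] qI_def)
  ultimately show ?thesis
    using A0 y1 unfolding A_def feasible_split_def by auto
qed

lemma sum_mult_diff_const:
  fixes y r :: "'a \<Rightarrow> 'b::comm_ring"
  shows "(\<Sum>w\<in>A. y w * (r w - c)) = (\<Sum>w\<in>A. y w * r w) - c * sum y A"
  by (simp add: right_diff_distrib sum_subtractf sum_distrib_left mult.commute)

lemma threshold_part_pointwise:
  assumes "threshold_part r p w0 x" "0 \<le> y w" "y w \<le> p w"
  shows "y w * (r w - r w0) \<le> x w * (r w - r w0)"
  using assms by (cases "r w0 < r w"; cases "r w < r w0")
    (auto simp: threshold_part_def mult_right_mono mult_nonneg_nonpos)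

lemma threshold_part_mass_maximal:
  assumes w0: "r w0 < 0" and x: "threshold_part r p w0 x" and y: "admissible_part r p y"
  shows "sum y UNIV \<le> sum x UNIV"
proof -
  have "(\<Sum>w\<in>UNIV. y w * (r w - r w0)) \<le> (\<Sum>w\<in>UNIV. x w * (r w - r w0))"
    using y by (intro sum_mono threshold_part_pointwise[OF x]) (auto simp: admissible_part_def)
  then have "- r w0 * sum y UNIV \<le> - r w0 * sum x UNIV"
    using x y by (simp add: sum_mult_diff_const threshold_part_def admissible_part_def)
  then show ?thesis using w0 by simp
qed

lemma threshold_part_unique:
  assumes x: "threshold_part r p w0 x" and y: "admissible_part r p y"
    and mass: "sum y UNIV = sum x UNIV" and tie: "\<forall>w. r w = r w0 \<longrightarrow> w = w0"
  shows "y = x"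
proof -
  have le: "y w * (r w - r w0) \<le> x w * (r w - r w0)" for w
    using y threshold_part_pointwise[OF x] by (simp add: admissible_part_def)
  moreover have "(\<Sum>w\<in>UNIV. x w * (r w - r w0)) \<le> (\<Sum>w\<in>UNIV. y w * (r w - r w0))"
    using x y mass by (simp add: sum_mult_diff_const threshold_part_def admissible_part_def)
  ultimately have "(\<Sum>w\<in>UNIV. y w * (r w - r w0)) = (\<Sum>w\<in>UNIV. x w * (r w - r w0))"
    by (simp add: antisym sum_mono)
  then have "y w * (r w - r w0) = x w * (r w - r w0)" for w
    by (rule sum_mono_inv[where f="\<lambda>w. y w * (r w - r w0)"]) (use le in auto)
  then have off: "y w = x w" if "w \<noteq> w0" for w
    using tie that by (metis eq_iff_diff_eq_0 mult_right_cancel)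
  have "y w0 + (\<Sum>w\<in>UNIV - {w0}. y w) = x w0 + (\<Sum>w\<in>UNIV - {w0}. x w)"
    using mass by (simp add: sum.remove)
  moreover have "(\<Sum>w\<in>UNIV - {w0}. y w) = (\<Sum>w\<in>UNIV - {w0}. x w)"
    using off by (intro sum.cong) auto
  ultimately have "y w0 = x w0" by simp
  with off show "y = x" by (metis ext)
qed

text \<open>The threshold is the highest negative level at which the tail sum of \<open>p r\<close>, taken
  from the top down to that level, becomes negative.\<close>

lemma ex_threshold:
  fixes r p :: "'w::finite \<Rightarrow> real"
  assumes p0: "\<forall>w. 0 \<le> p w" and neg: "(\<Sum>w\<in>UNIV. p w * r w) < 0"
  shows "\<exists>w0. r w0 < 0 \<and> (\<Sum>w | r w0 \<le> r w. p w * r w) < 0 \<and> 0 \<le> (\<Sum>w | r w0 < r w. p w * r w)"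
proof -
  define B where "B = {w0. r w0 < 0 \<and> (\<Sum>w | r w0 \<le> r w. p w * r w) < 0}"
  obtain wmin where wmin: "\<forall>w. r wmin \<le> r w"
    using ex_is_arg_min_if_finite[of UNIV r] by (auto simp: is_arg_min_linorder)
  have "r wmin < 0"
  proof (rule ccontr)
    assume "\<not> r wmin < 0"
    then have "0 \<le> (\<Sum>w\<in>UNIV. p w * r w)"
      using p0 wmin by (intro sum_nonneg) (metis mult_nonneg_nonneg not_less order_trans)
    with neg show False by simp
  qed
  with wmin neg have "wmin \<in> B" by (simp add: B_def)
  then obtain w0 where w0: "w0 \<in> B" and w0max: "\<forall>w\<in>B. r w \<le> r w0"
    using ex_is_arg_min_if_finite[of B "\<lambda>w. - r w"] by (auto simp: is_arg_min_linorder)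
  have "0 \<le> (\<Sum>w | r w0 < r w. p w * r w)"
  proof (cases "\<exists>w. r w0 < r w \<and> r w < 0")
    case False
    then show ?thesis
      using p0 by (intro sum_nonneg) (metis mem_Collect_eq mult_nonneg_nonneg not_le order_less_imp_le)
  next
    case True
    then obtain w1 where w1: "r w0 < r w1" "r w1 < 0"
      and w1min: "\<forall>w. r w0 < r w \<and> r w < 0 \<longrightarrow> r w1 \<le> r w"
      using ex_is_arg_min_if_finite[of "{w. r w0 < r w \<and> r w < 0}" r]
      by (auto simp: is_arg_min_linorder)
    have "{w. r w1 \<le> r w} = {w. r w0 < r w}"
      using w1 w1min by force
    moreover have "w1 \<notin> B" using w0max w1 by force
    ultimately show ?thesis using w1 by (simp add: B_def)
  qed
  with w0 show ?thesis by (auto simp: B_def)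
qed

lemma ex_threshold_part:
  fixes r p :: "'w::finite \<Rightarrow> real"
  assumes p0: "\<forall>w. 0 \<le> p w" and neg: "(\<Sum>w\<in>UNIV. p w * r w) < 0"
  shows "\<exists>w0 x. r w0 < 0 \<and> threshold_part r p w0 x"
proof -
  obtain w0 where w0: "r w0 < 0"
    and H: "(\<Sum>w | r w0 \<le> r w. p w * r w) < 0" and G: "0 \<le> (\<Sum>w | r w0 < r w. p w * r w)"
    using ex_threshold[OF assms] by blast
  define upper where "upper = (\<Sum>w\<in>UNIV. if r w0 < r w then p w * r w else 0)"
  define level where "level = (\<Sum>w\<in>UNIV. if r w = r w0 then p w * r w else 0)"
  have "(\<Sum>w | r w0 \<le> r w. p w * r w) = (\<Sum>w\<in>UNIV. if r w0 \<le> r w then p w * r w else 0)"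
    by (simp add: sum.If_cases)
  also have "\<dots> = upper + level"
    unfolding upper_def level_def sum.distrib[symmetric] by (intro sum.cong) auto
  finally have upper0: "0 \<le> upper" and level0: "upper + level < 0"
    using G H by (simp_all add: upper_def sum.If_cases)
  define \<theta> where "\<theta> = - upper / level"
  have \<theta>: "0 \<le> \<theta>" "\<theta> < 1" and "upper + \<theta> * level = 0"
    using upper0 level0 by (auto simp: \<theta>_def field_simps)
  define x where "x = (\<lambda>w. if r w0 < r w then p w else if r w = r w0 then \<theta> * p w else 0)"
  have "x w * r w = (if r w0 < r w then p w * r w else 0) + \<theta> * (if r w = r w0 then p w * r w else 0)" for w
    by (auto simp: x_def)
  then have "(\<Sum>w\<in>UNIV. x w * r w) = upper + \<theta> * level"
    by (simp add: upper_def level_def sum.distrib sum_distrib_left)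
  moreover have "0 \<le> x w \<and> x w \<le> p w" for w
    using p0 \<theta> by (auto simp: x_def mult_left_le_one_le)
  ultimately have "threshold_part r p w0 x"
    using \<open>upper + \<theta> * level = 0\<close> by (auto simp: threshold_part_def x_def)
  with w0 show ?thesis by blast
qed

lemma threshold_part_mass_less_one:
  assumes p: "p \<in> prob_simplex" and neg: "(\<Sum>w\<in>UNIV. p w * r w) < 0" and x: "threshold_part r p w0 x"
  shows "sum x UNIV < 1"
proof -
  have xp: "\<forall>w\<in>UNIV. x w \<le> p w" using x by (simp add: threshold_part_def)
  have "x \<noteq> p" using x neg by (auto simp: threshold_part_def)
  then obtain w where "x w < p w" using xp by (metis ext order_less_le UNIV_I)
  then have "sum x UNIV < sum p UNIV"
    using xp by (intro sum_strict_mono_ex1) auto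
  with p show ?thesis by (simp add: prob_simplex_def)
qed

lemma feasible_split_le_threshold_part:
  assumes "r w0 < 0" "threshold_part r p w0 x" "feasible_split r p a qI aJ qJ"
  shows "a \<le> sum x UNIV"
  using threshold_part_mass_maximal[OF assms(1,2) feasible_split_admissible_part(1)[OF assms(3)]]
    feasible_split_admissible_part(2)[OF assms(3)] by simp

lemma greedy_split_of_threshold_part:
  assumes p: "p \<in> Jset r" and w0: "r w0 < 0" and x: "threshold_part r p w0 x"
  shows "\<exists>qI. greedy_split r p (sum x UNIV) qI (1 - sum x UNIV) (\<lambda>w. (p w - x w) / (1 - sum x UNIV))"
proof -
  have "sum x UNIV < 1"
    using p x threshold_part_mass_less_one by (auto simp: Jset_iff)
  then obtain qI where
    "feasible_split r p (sum x UNIV) qI (1 - sum x UNIV) (\<lambda>w. (p w - x w) / (1 - sum x UNIV))"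
    using feasible_split_of_admissible_part[OF _ threshold_part_admissible_part[OF x]] p
    by (auto simp: Jset_iff)
  then show ?thesis
    using feasible_split_le_threshold_part[OF w0 x] by (auto simp: greedy_split_def)
qed

lemma greedy_split_eq_threshold_part:
  assumes p: "p \<in> Jset r" and w0: "r w0 < 0" and x: "threshold_part r p w0 x"
    and tie: "\<forall>w. r w = r w0 \<longrightarrow> w = w0" and g: "greedy_split r p a qI aJ qJ"
  shows "a = sum x UNIV" and "(\<lambda>w. a * qI w) = x"
    and "aJ = 1 - sum x UNIV" and "qJ = (\<lambda>w. (p w - x w) / (1 - sum x UNIV))"
proof -
  have f: "feasible_split r p a qI aJ qJ" using g by (simp add: greedy_split_def)
  obtain qI' where "greedy_split r p (sum x UNIV) qI' (1 - sum x UNIV) (\<lambda>w. (p w - x w) / (1 - sum x UNIV))"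
    using greedy_split_of_threshold_part[OF p w0 x] by blast
  then have "sum x UNIV \<le> a"
    using g unfolding greedy_split_def by blast
  then show a: "a = sum x UNIV"
    using feasible_split_le_threshold_part[OF w0 x f] by simp
  then show ax: "(\<lambda>w. a * qI w) = x"
    using threshold_part_unique[OF x feasible_split_admissible_part(1)[OF f] _ tie]
      feasible_split_admissible_part(2)[OF f] by simp
  show aJ: "aJ = 1 - sum x UNIV" using f a by (simp add: feasible_split_def)
  have "sum x UNIV < 1"
    using p x threshold_part_mass_less_one by (auto simp: Jset_iff)
  moreover have "p w = x w + aJ * qJ w" for w
    using f ax by (auto simp: feasible_split_def dest: fun_cong)
  ultimately show "qJ = (\<lambda>w. (p w - x w) / (1 - sum x UNIV))"
    using aJ by (simp add: fun_eq_iff eq_divide_eq)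
qed

lemma split_measure_cong:
  assumes "(\<lambda>w. a * qI w) = (\<lambda>w. a * qI' w)"
  shows "split_measure a qI aJ qJ = split_measure a qI' aJ qJ"
proof (cases "a = 0")
  case False
  with assms have "qI = qI'" by (auto simp: fun_eq_iff)
  then show ?thesis by simp
qed (simp add: split_measure_def)

lemma greedy_split_I_component_Fset:
  assumes p: "p \<in> Jset r" and w0: "r w0 < 0" and x: "threshold_part r p w0 x"
    and tie: "\<forall>w. r w = r w0 \<longrightarrow> w = w0" and g: "greedy_split r p a qI aJ qJ" and a: "0 < a"
  shows "qI \<in> Fset r"
proof -
  have "a * (\<Sum>w\<in>UNIV. qI w * r w) = (\<Sum>w\<in>UNIV. x w * r w)"
    using greedy_split_eq_threshold_part(2)[OF p w0 x tie g]
    by (auto simp: sum_distrib_left mult.assoc)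
  with x a show ?thesis by (simp add: threshold_part_def Fset_def)
qed

lemma greedy_split_J_component_neg:
  assumes p: "p \<in> Jset r" and w0: "r w0 < 0" and x: "threshold_part r p w0 x"
    and tie: "\<forall>w. r w = r w0 \<longrightarrow> w = w0" and g: "greedy_split r p a qI aJ qJ"
  shows "qJ \<in> prob_simplex_neg r"
proof -
  have "qJ w = 0" if "w \<notin> Omega_neg r" for w
    using that greedy_split_eq_threshold_part(4)[OF p w0 x tie g] x w0
    by (simp add: Omega_neg_def threshold_part_def)
  with g show ?thesis
    by (simp add: greedy_split_def feasible_split_def prob_simplex_neg_def)
qed

theorem lemma3:
  fixes r :: "'w::finite \<Rightarrow> real" and p :: "'w \<Rightarrow> real"
  assumes distinct: "\<forall>w w'. w \<in> Omega_neg r \<longrightarrow> w' \<in> Omega_neg r \<longrightarrow> w \<noteq> w' \<longrightarrow> r w \<noteq> r w'"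
    and pJ: "p \<in> Jset r"
  shows "(\<exists>aI qI aJ qJ. greedy_split r p aI qI aJ qJ)
    \<and> (\<forall>aI qI aJ qJ aI' qI' aJ' qJ'.
          greedy_split r p aI qI aJ qJ \<longrightarrow> greedy_split r p aI' qI' aJ' qJ' \<longrightarrow>
          split_measure aI qI aJ qJ = split_measure aI' qI' aJ' qJ')
    \<and> (\<forall>aI qI aJ qJ. greedy_split r p aI qI aJ qJ \<longrightarrow>
          (0 < aI \<longrightarrow> qI \<in> Fset r) \<and> qJ \<in> prob_simplex_neg r)"
proof -
  obtain w0 x where w0: "r w0 < 0" and x: "threshold_part r p w0 x"
    using ex_threshold_part[of p r] pJ by (auto simp: Jset_iff prob_simplex_def)
  have tie: "\<forall>w. r w = r w0 \<longrightarrow> w = w0"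
    using distinct w0 by (metis Omega_neg_def mem_Collect_eq)
  note greedy = greedy_split_eq_threshold_part[OF pJ w0 x tie]
  have "split_measure a qI aJ qJ = split_measure a' qI' aJ' qJ'"
    if "greedy_split r p a qI aJ qJ" "greedy_split r p a' qI' aJ' qJ'" for a qI aJ qJ a' qI' aJ' qJ'
    using greedy[OF that(1)] greedy[OF that(2)] split_measure_cong[of a qI qI'] by simp
  then show ?thesis
    using greedy_split_of_threshold_part[OF pJ w0 x]
      greedy_split_I_component_Fset[OF pJ w0 x tie] greedy_split_J_component_neg[OF pJ w0 x tie]
    by blast
qed

end
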